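(* Let $k \geq 2$ be an integer. For each $k$-admissible integer $n$ such that $n \geq 2k$, any partial $k$-star design of order $n$ with at most $u(n,k)$ stars has a completion, where \[u(n,k)= \begin{cases} 2 \lfloor \frac{n-2}{k} \rfloor-1 & \text{if $n \not \equiv 1\pmod{k}$},\\ \frac{2(n-1)}{k} - 2 & \text{if $n \equiv 1\pmod{k}$.} \end{cases} \] Furthermore, for each $k$-admissible integer $n > 1$, there is a partial $k$-star design of order $n$ with $u(n,k)+1$ stars that has no completion.
   Context: A $k$-star is a copy of the complete bipartite graph $K_{1,k}$. For a set $V$, $K_V$ denotes the complete graph on $V$. A partial $k$-star design of order $n$ is a pair $(V,\mathcal{A})$ where $V$ is a set of $n$ vertices and $\mathcal{A}$ is a set of edge-disjoint $k$-stars that are subgraphs of $K_V$ (i.e. a $k$-star decomposition of some subgraph of $K_V$); if every edge of $K_V$ lies in some star of $\mathcal{A}$ it is a $k$-star design. A completion of $(V,\mathcal{A})$ is a $k$-star design $(V,\mathcal{B})$ with $\mathcal{A}\subseteq\mathcal{B}$. A positive integer $n$ is $k$-admissible if $\binom{n}{2}\equiv 0 \pmod{k}$. *)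

theory Defs
  imports Main
begin

definition complete_edges :: "'a set \<Rightarrow> 'a set set" where
  "complete_edges V = {{x, y} | x y. x \<in> V \<and> y \<in> V \<and> x \<noteq> y}"

definition is_kstar :: "nat \<Rightarrow> 'a set \<Rightarrow> 'a set set \<Rightarrow> bool" where
  "is_kstar k V S \<longleftrightarrow> (\<exists>c L. c \<in> V \<and> L \<subseteq> V \<and> c \<notin> L \<and> finite L \<and> card L = k
       \<and> S = (\<lambda>l. {c, l}) ` L)"

definition partial_kstar_design :: "nat \<Rightarrow> 'a set \<Rightarrow> 'a set set set \<Rightarrow> bool" where
  "partial_kstar_design k V A \<longleftrightarrow>
     (\<forall>S\<in>A. is_kstar k V S) \<and> (\<forall>S\<in>A. \<forall>T\<in>A. S \<noteq> T \<longrightarrow> S \<inter> T = {})"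

definition kstar_design :: "nat \<Rightarrow> 'a set \<Rightarrow> 'a set set set \<Rightarrow> bool" where
  "kstar_design k V B \<longleftrightarrow> partial_kstar_design k V B \<and> \<Union> B = complete_edges V"

definition has_completion :: "nat \<Rightarrow> 'a set \<Rightarrow> 'a set set set \<Rightarrow> bool" where
  "has_completion k V A \<longleftrightarrow> (\<exists>B. kstar_design k V B \<and> A \<subseteq> B)"

definition k_admissible :: "nat \<Rightarrow> nat \<Rightarrow> bool" where
  "k_admissible k n \<longleftrightarrow> (n choose 2) mod k = 0"

definition u_bound :: "nat \<Rightarrow> nat \<Rightarrow> int" where
  "u_bound n k = (if n mod k \<noteq> 1 mod k then 2 * ((int n - 2) div int k) - 1
                  else (2 * (int n - 1)) div int k - 2)"

end

theory Submission
  imports Defs "HOL-Library.Disjoint_Sets"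
begin

lemma complete_edges_eq: "complete_edges V = {e. e \<subseteq> V \<and> card e = 2}"
  unfolding complete_edges_def by (auto simp: card_2_iff)

lemma finite_complete_edges: "finite V \<Longrightarrow> finite (complete_edges V)"
  unfolding complete_edges_eq by (rule finite_subset[of _ "Pow V"]) auto

lemma card_complete_edges: "finite V \<Longrightarrow> card (complete_edges V) = card V choose 2"
  unfolding complete_edges_eq by (rule n_subsets)

lemma complete_edges_within: "S \<subseteq> V \<Longrightarrow> {e \<in> complete_edges V. e \<subseteq> S} = complete_edges S"
  unfolding complete_edges_def by auto

lemma two_mult_choose_two: "2 * (n choose 2) = n * (n - 1)"
  unfolding choose_two by (cases "even n") (auto simp: odd_pos)

lemma kstar_subset_complete_edges: "is_kstar k V S \<Longrightarrow> S \<subseteq> complete_edges V"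
  unfolding is_kstar_def complete_edges_def by auto

lemma card_kstar: "is_kstar k V S \<Longrightarrow> card S = k"
  unfolding is_kstar_def by (auto simp: card_image inj_on_def doubleton_eq_iff)

lemma is_kstar_if_edges_through:
  assumes "P \<subseteq> complete_edges V" "\<forall>e\<in>P. c \<in> e" "c \<in> V" "finite P" "card P = k"
  shows "is_kstar k V P"
proof -
  define L where "L = \<Union>P - {c}"
  have edge: "\<exists>l. l \<in> V \<and> l \<noteq> c \<and> e = {c, l}" if "e \<in> P" for e
    using assms(1,2) that unfolding complete_edges_def by fastforce
  have P_eq: "P = (\<lambda>l. {c, l}) ` L"
  proof (intro equalityI subsetI)
    fix e assume "e \<in> P"
    with edge obtain l where "l \<noteq> c" "e = {c, l}" by blast
    with \<open>e \<in> P\<close> show "e \<in> (\<lambda>l. {c, l}) ` L"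
      unfolding L_def by blast
  next
    fix e assume "e \<in> (\<lambda>l. {c, l}) ` L"
    then obtain l e' where "e = {c, l}" "l \<in> e'" "e' \<in> P" "l \<noteq> c"
      unfolding L_def by blast
    with edge show "e \<in> P" by fastforce
  qed
  have "inj_on (\<lambda>l. {c, l}) L"
    unfolding L_def by (auto simp: inj_on_def doubleton_eq_iff)
  then have "card L = k"
    using P_eq assms(5) card_image by metis
  moreover have "L \<subseteq> V" "finite L"
    using assms(1,4) unfolding L_def complete_edges_def by auto
  moreover have "c \<notin> L"
    unfolding L_def by blast
  ultimately show ?thesis
    unfolding is_kstar_def using P_eq assms(3) by (intro exI[of _ c] exI[of _ L]) simp
qed

lemma partial_kstar_design_Un:
  assumes "partial_kstar_design k V A" "partial_kstar_design k V B" "\<Union>A \<inter> \<Union>B = {}"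
  shows "partial_kstar_design k V (A \<union> B)"
  unfolding partial_kstar_design_def
proof (intro conjI ballI impI)
  fix S assume "S \<in> A \<union> B"
  then show "is_kstar k V S"
    using assms(1,2) unfolding partial_kstar_design_def by auto
next
  fix S T assume ST: "S \<in> A \<union> B" "T \<in> A \<union> B" "S \<noteq> T"
  then consider "S \<in> A" "T \<in> A" | "S \<in> B" "T \<in> B" | "S \<inter> T \<subseteq> \<Union>A \<inter> \<Union>B"
    by blast
  then show "S \<inter> T = {}"
  proof cases
    case 1
    then show ?thesis using assms(1) ST(3) unfolding partial_kstar_design_def by simp
  next
    case 2
    then show ?thesis using assms(2) ST(3) unfolding partial_kstar_design_def by simp
  qed (use assms(3) in simp)
qed

lemma finite_partial_kstar_design:
  assumes "finite V" "partial_kstar_design k V A"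
  shows "finite A"
proof (rule finite_subset)
  show "A \<subseteq> Pow (complete_edges V)"
    using assms(2) kstar_subset_complete_edges unfolding partial_kstar_design_def by auto
  show "finite (Pow (complete_edges V))"
    using assms(1) finite_complete_edges by simp
qed

definition leave :: "'a set \<Rightarrow> 'a set set set \<Rightarrow> 'a set set" where
  "leave V A = complete_edges V - \<Union>A"

lemma card_leave:
  assumes "finite V" "partial_kstar_design k V A"
  shows "card (leave V A) = (card V choose 2) - k * card A"
proof -
  have stars: "\<forall>S\<in>A. is_kstar k V S" and "disjoint A"
    using assms(2) unfolding partial_kstar_design_def by (auto simp: pairwise_def disjnt_def)
  then have "card (\<Union>A) = (\<Sum>S\<in>A. card S)"
    using finite_subset[OF kstar_subset_complete_edges finite_complete_edges[OF assms(1)]]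
    by (intro card_Union_disjoint) auto
  also have "\<dots> = (\<Sum>S\<in>A. k)"
    using stars card_kstar by (intro sum.cong) auto
  finally have "card (\<Union>A) = k * card A" by simp
  moreover have "\<Union>A \<subseteq> complete_edges V"
    using stars kstar_subset_complete_edges by blast
  ultimately show ?thesis
    unfolding leave_def using assms(1)
    by (simp add: card_Diff_subset finite_complete_edges card_complete_edges finite_subset)
qed

lemma ex_partition_on_card_eq:
  assumes "finite Y" "0 < k" "k dvd card Y"
  shows "\<exists>P. partition_on Y P \<and> (\<forall>p\<in>P. card p = k)"
  using assms
proof (induction "card Y" arbitrary: Y rule: less_induct)
  case less
  show ?case
  proof (cases "Y = {}")
    case True
    then show ?thesis by (auto simp: partition_on_empty)
  next
    case False
    then have "k \<le> card Y"
      using less.prems by (intro dvd_imp_le) (auto simp: card_gt_0_iff)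
    then obtain p where p: "p \<subseteq> Y" "card p = k" "finite p"
      by (rule obtain_subset_with_card_n)
    then have "card (Y - p) < card Y" "k dvd card (Y - p)"
      using less.prems \<open>k \<le> card Y\<close> by (auto simp: card_Diff_subset)
    then obtain P where P: "partition_on (Y - p) P" "\<forall>q\<in>P. card q = k"
      using less.hyps[of "Y - p"] less.prems(1,2) by blast
    have "disjnt p (\<Union>P)"
      using partition_onD1[OF P(1)] by (auto simp: disjnt_def)
    moreover have "p \<noteq> {}"
      using p less.prems(2) by auto
    ultimately have "partition_on Y (insert p P)"
      using P(1) p(1) by (simp add: partition_on_insert Diff_partition)
    with P(2) p(2) show ?thesis by blast
  qed
qed
lemma Union_subset_complete_edges:
  assumes "partial_kstar_design k V A"
  shows "\<Union>A \<subseteq> complete_edges V"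
proof (rule Union_least)
  fix S assume "S \<in> A"
  then have "is_kstar k V S"
    using assms unfolding partial_kstar_design_def by simp
  then show "S \<subseteq> complete_edges V"
    by (rule kstar_subset_complete_edges)
qed

lemma has_completion_if_outdegrees_dvd:
  assumes "0 < k" "finite V" "partial_kstar_design k V A"
    and tail: "\<forall>e\<in>leave V A. t e \<in> e"
    and dvd: "\<forall>v\<in>V. k dvd card {e \<in> leave V A. t e = v}"
  shows "has_completion k V A"
proof -
  let ?out = "\<lambda>v. {e \<in> leave V A. t e = v}"
  have fin_out: "finite (?out v)" for v
    using assms(2) by (simp add: leave_def finite_complete_edges)
  have "\<exists>P. partition_on (?out v) P \<and> (\<forall>p\<in>P. card p = k)" if "v \<in> V" for v
    using ex_partition_on_card_eq[OF fin_out assms(1)] dvd that by blast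
  then obtain P where P: "\<And>v. v \<in> V \<Longrightarrow> partition_on (?out v) (P v) \<and> (\<forall>p\<in>P v. card p = k)"
    by metis
  have P_out: "p \<subseteq> ?out v" if "v \<in> V" "p \<in> P v" for v p
    using P[OF that(1)] that(2) by (auto dest: partition_onD1)
  define B where "B = (\<Union>v\<in>V. P v)"
  have "partial_kstar_design k V B"
    unfolding partial_kstar_design_def B_def
  proof (intro conjI ballI impI)
    fix p assume "p \<in> (\<Union>v\<in>V. P v)"
    then obtain v where v: "v \<in> V" "p \<in> P v" by blast
    show "is_kstar k V p"
    proof (rule is_kstar_if_edges_through)
      show "p \<subseteq> complete_edges V" "\<forall>e\<in>p. v \<in> e"
        using P_out[OF v] tail unfolding leave_def by auto
      show "finite p"
        using finite_subset[OF P_out[OF v] fin_out] .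
      show "card p = k"
        using P[OF v(1)] v(2) by simp
    qed (fact v(1))
  next
    fix p q assume "p \<in> (\<Union>v\<in>V. P v)" "q \<in> (\<Union>v\<in>V. P v)" "p \<noteq> q"
    then obtain v w where vw: "v \<in> V" "p \<in> P v" "w \<in> V" "q \<in> P w" by blast
    show "p \<inter> q = {}"
    proof (cases "v = w")
      case True
      have "partition_on (?out v) (P v)"
        using P[OF vw(1)] by simp
      then have "disjoint (P v)"
        by (rule partition_onD2)
      then show ?thesis
        using vw(2,4) True \<open>p \<noteq> q\<close> by (simp add: pairwise_def disjnt_def)
    next
      case False
      then show ?thesis
        using P_out[OF vw(1,2)] P_out[OF vw(3,4)] by blast
    qed
  qed
  moreover have "\<Union>B = leave V A"
  proof
    show "\<Union>B \<subseteq> leave V A"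
      using P_out unfolding B_def by blast
    show "leave V A \<subseteq> \<Union>B"
    proof
      fix e assume e: "e \<in> leave V A"
      then have "t e \<in> V"
        using tail unfolding leave_def complete_edges_eq by blast
      moreover have "partition_on (?out (t e)) (P (t e))"
        using P[OF \<open>t e \<in> V\<close>] by simp
      then have "e \<in> \<Union>(P (t e))"
        using e by (auto dest: partition_onD1)
      ultimately show "e \<in> \<Union>B"
        unfolding B_def by blast
    qed
  qed
  ultimately have "kstar_design k V (A \<union> B)"
    using partial_kstar_design_Un[OF assms(3)] Union_subset_complete_edges[OF assms(3)]
    unfolding kstar_design_def leave_def by (simp add: Un_Diff_cancel Un_absorb1)
  then show ?thesis
    unfolding has_completion_def by blast
qed

lemma sum_card_fibres:
  assumes "finite V" "finite E" "t ` E \<subseteq> V"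
  shows "(\<Sum>v\<in>V. card {e \<in> E. t e = v}) = card E"
  using sum.group[OF assms(2,1,3), of "\<lambda>_. 1::nat"] by simp
lemma dvd_card_last_fibre:
  assumes "finite V" "finite E" "t ` E \<subseteq> V" "w \<in> V" "k dvd card E"
    and "\<forall>v\<in>V - {w}. k dvd card {e \<in> E. t e = v}"
  shows "k dvd card {e \<in> E. t e = w}"
proof -
  have "card E = card {e \<in> E. t e = w} + (\<Sum>v\<in>V - {w}. card {e \<in> E. t e = v})"
    unfolding sum_card_fibres[OF assms(1-3), symmetric] using assms(1,4) by (rule sum.remove)
  moreover have "k dvd (\<Sum>v\<in>V - {w}. card {e \<in> E. t e = v})"
    by (rule dvd_sum) (use assms(6) in blast)
  ultimately show ?thesis
    using assms(5) dvd_add_left_iff by auto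
qed

lemma card_edges_within_Un_Int:
  assumes "finite E" "e \<in> E" "e \<subseteq> S \<union> T" "\<not> e \<subseteq> S" "\<not> e \<subseteq> T"
  shows "card {f \<in> E. f \<subseteq> S} + card {f \<in> E. f \<subseteq> T} + 1
           \<le> card {f \<in> E. f \<subseteq> S \<union> T} + card {f \<in> E. f \<subseteq> S \<inter> T}"
proof -
  let ?E = "\<lambda>X. {f \<in> E. f \<subseteq> X}"
  have "card (?E S) + card (?E T) = card (?E S \<union> ?E T) + card (?E S \<inter> ?E T)"
    using assms(1) by (intro card_Un_Int) auto
  moreover have "?E S \<inter> ?E T = ?E (S \<inter> T)"
    by auto
  moreover have "card (insert e (?E S \<union> ?E T)) \<le> card (?E (S \<union> T))"
    using assms by (intro card_mono) auto
  moreover have "e \<notin> ?E S \<union> ?E T"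
    using assms(4,5) by simp
  ultimately show ?thesis
    using assms(1) by simp
qed

lemma ex_slack_direction:
  assumes "finite V" "finite E" "{u, v} \<in> E"
    and cond: "\<forall>S\<subseteq>V. card {f \<in> E. f \<subseteq> S} \<le> sum d S"
  shows "(\<forall>S\<subseteq>V. u \<in> S \<and> v \<notin> S \<longrightarrow> card {f \<in> E. f \<subseteq> S} < sum d S)
       \<or> (\<forall>S\<subseteq>V. v \<in> S \<and> u \<notin> S \<longrightarrow> card {f \<in> E. f \<subseteq> S} < sum d S)"
proof (rule ccontr)
  let ?c = "\<lambda>S. card {f \<in> E. f \<subseteq> S}"
  assume "\<not> ?thesis"
  then obtain S T where S: "S \<subseteq> V" "u \<in> S" "v \<notin> S" "sum d S \<le> ?c S"
    and T: "T \<subseteq> V" "v \<in> T" "u \<notin> T" "sum d T \<le> ?c T"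
    by (auto simp: not_less)
  have "?c S + ?c T + 1 \<le> ?c (S \<union> T) + ?c (S \<inter> T)"
    using S T assms(2,3) by (intro card_edges_within_Un_Int) auto
  also have "\<dots> \<le> sum d (S \<union> T) + sum d (S \<inter> T)"
    by (intro add_mono cond[rule_format]) (use S(1) T(1) in auto)
  also have "\<dots> = sum d S + sum d T"
    using S(1) T(1) assms(1) by (intro sum.union_inter) (auto intro: finite_subset)
  finally show False
    using S(4) T(4) by linarith
qed

lemma card_edges_within_insert:
  assumes "finite F" "e \<notin> F"
  shows "card {f \<in> insert e F. f \<subseteq> S} = card {f \<in> F. f \<subseteq> S} + (if e \<subseteq> S then 1 else 0)"
proof -
  have "{f \<in> insert e F. f \<subseteq> S} = (if e \<subseteq> S then insert e {f \<in> F. f \<subseteq> S} else {f \<in> F. f \<subseteq> S})"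
    by auto
  then show ?thesis
    using assms by simp
qed

lemma card_fibre_fun_upd_insert:
  assumes "finite F" "e \<notin> F"
  shows "card {f \<in> insert e F. (t(e := a)) f = w} = card {f \<in> F. t f = w} + (if w = a then 1 else 0)"
proof -
  have "{f \<in> insert e F. (t(e := a)) f = w}
          = (if w = a then insert e {f \<in> F. t f = w} else {f \<in> F. t f = w})"
    using assms(2) by auto
  then show ?thesis
    using assms by simp
qed

theorem orientation_with_outdegrees:
  assumes "finite V" "E \<subseteq> complete_edges V"
    and "sum d V = card E" and "\<forall>S\<subseteq>V. card {e \<in> E. e \<subseteq> S} \<le> sum d S"
  shows "\<exists>t. (\<forall>e\<in>E. t e \<in> e) \<and> (\<forall>v\<in>V. card {e \<in> E. t e = v} = d v)"
proof -
  have "finite E"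
    using assms(1,2) finite_subset finite_complete_edges by blast
  from this assms(2-4) show ?thesis
  proof (induction E arbitrary: d rule: finite_induct)
    case empty
    then show ?case
      using assms(1) by simp
  next
    case (insert e F)
    let ?c = "\<lambda>S. card {f \<in> insert e F. f \<subseteq> S}"
    obtain u v where uv: "e = {u, v}" "u \<in> V" "v \<in> V" "u \<noteq> v"
      using insert.prems(1) unfolding complete_edges_def by auto
    have "finite (insert e F)"
      using insert.hyps(1) by simp
    then consider "\<forall>S\<subseteq>V. u \<in> S \<and> v \<notin> S \<longrightarrow> ?c S < sum d S"
      | "\<forall>S\<subseteq>V. v \<in> S \<and> u \<notin> S \<longrightarrow> ?c S < sum d S"
      using ex_slack_direction[OF assms(1), of "insert e F" u v d] insert.prems(3) uv(1) by blast
    then obtain a b where e: "e = {a, b}" "a \<in> V" "a \<noteq> b"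
      and slack: "\<forall>S\<subseteq>V. a \<in> S \<and> b \<notin> S \<longrightarrow> ?c S < sum d S"
    proof cases
      case 1
      then show thesis using that[of u v] uv by blast
    next
      case 2
      then show thesis using that[of v u] uv by (simp add: insert_commute)
    qed
    have "?c {a} = 0"
      using insert.prems(1) unfolding complete_edges_def by (auto simp: card_eq_0_iff)
    then have "0 < d a"
      using slack[rule_format, of "{a}"] e(2,3) by simp
    define d' where "d' w = d w - (if w = a then 1 else 0)" for w
    have sum_d': "sum d' S = sum d S - (if a \<in> S then 1 else 0)" if "S \<subseteq> V" for S
    proof -
      have "finite S"
        using that assms(1) finite_subset by blast
      then have "sum d' S = sum d S - (\<Sum>w\<in>S. if w = a then 1 else 0)"
        unfolding d'_def using \<open>0 < d a\<close> by (intro sum_subtractf_nat) auto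
      then show ?thesis
        using \<open>finite S\<close> by simp
    qed
    have c_insert: "?c S = card {f \<in> F. f \<subseteq> S} + (if e \<subseteq> S then 1 else 0)" for S
      using card_edges_within_insert[OF insert.hyps] .
    have "sum d' V = card F"
      using sum_d'[of V] insert.prems(2) insert.hyps e(2) by simp
    moreover have "\<forall>S\<subseteq>V. card {f \<in> F. f \<subseteq> S} \<le> sum d' S"
    proof (intro allI impI)
      fix S assume "S \<subseteq> V"
      then have "?c S \<le> sum d S" "a \<in> S \<and> b \<notin> S \<longrightarrow> ?c S < sum d S"
        using insert.prems(3) slack by auto
      then show "card {f \<in> F. f \<subseteq> S} \<le> sum d' S"
        using sum_d'[OF \<open>S \<subseteq> V\<close>] c_insert[of S] e(1) by auto
    qed
    ultimately obtain t where t: "\<forall>f\<in>F. t f \<in> f" "\<forall>w\<in>V. card {f \<in> F. t f = w} = d' w"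
      using insert.IH insert.prems(1) by blast
    have "\<forall>f\<in>insert e F. (t(e := a)) f \<in> f"
      using t(1) e(1) by simp
    moreover have "card {f \<in> insert e F. (t(e := a)) f = w} = d w" if "w \<in> V" for w
    proof -
      have "card {f \<in> insert e F. (t(e := a)) f = w} = card {f \<in> F. t f = w} + (if w = a then 1 else 0)"
        by (rule card_fibre_fun_upd_insert[OF insert.hyps])
      also have "\<dots> = d w"
        using t(2) that \<open>0 < d a\<close> unfolding d'_def by auto
      finally show ?thesis .
    qed
    ultimately show ?case
      by blast
  qed
qed

lemma choose_two_add: "(a + b) choose 2 = (a choose 2) + a * b + (b choose 2)"
  by (induction b) (simp_all add: numeral_2_eq_2)

lemma ex_low_and_high_vertex:
  fixes d :: "'a \<Rightarrow> nat"
  assumes "finite W" "S \<subseteq> W" "sum d W = card W choose 2" "sum d S < card S choose 2"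
  shows "\<exists>v\<in>S. \<exists>w\<in>W - S. 2 * d v + 2 \<le> card S \<and> card W + card S \<le> 2 * d w"
proof -
  define s s' where "s = card S" and "s' = card (W - S)"
  have fin: "finite S" "finite (W - S)"
    using assms(1,2) finite_subset by auto
  have N: "card W = s + s'"
    unfolding s_def s'_def using assms(1,2) by (simp add: card_Diff_subset card_mono fin(1))
  have sum_W: "sum d W = sum d S + sum d (W - S)"
    using assms(1,2) by (simp add: sum.subset_diff)
  have low: "\<exists>v\<in>S. 2 * d v + 2 \<le> s"
  proof (rule ccontr)
    assume "\<not> ?thesis"
    then have "\<forall>v\<in>S. s - 1 \<le> 2 * d v"
      by auto
    then have "s * (s - 1) \<le> (\<Sum>v\<in>S. 2 * d v)"
      using sum_bounded_below[of S "s - 1" "\<lambda>v. 2 * d v"] unfolding s_def by simp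
    then have "2 * (s choose 2) \<le> 2 * sum d S"
      by (simp add: two_mult_choose_two sum_distrib_left)
    then show False
      using assms(4) unfolding s_def by simp
  qed
  have high: "\<exists>w\<in>W - S. 2 * s + s' \<le> 2 * d w"
  proof (rule ccontr)
    assume not_high: "\<not> ?thesis"
    have bound: "2 * d w \<le> 2 * s + s' - 1" if "w \<in> W - S" for w
    proof -
      have "\<not> 2 * s + s' \<le> 2 * d w"
        using not_high that by blast
      then show ?thesis
        by linarith
    qed
    have "(\<Sum>w\<in>W - S. 2 * d w) \<le> of_nat (card (W - S)) * (2 * s + s' - 1)"
      using bound by (rule sum_bounded_above)
    then have "(\<Sum>w\<in>W - S. 2 * d w) \<le> s' * (2 * s + s' - 1)"
      by (simp add: s'_def[symmetric])
    also have "\<dots> = 2 * (s * s') + s' * (s' - 1)"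
      by (cases s') (auto simp: algebra_simps)
    finally have "2 * sum d (W - S) \<le> 2 * (s * s' + (s' choose 2))"
      by (simp add: two_mult_choose_two sum_distrib_left)
    then show False
      using assms(3,4) sum_W unfolding N s_def by (simp add: choose_two_add)
  qed
  obtain v where "v \<in> S" "2 * d v + 2 \<le> s"
    using low by blast
  moreover obtain w where "w \<in> W - S" "2 * s + s' \<le> 2 * d w"
    using high by blast
  ultimately show ?thesis
    unfolding s_def N by (intro bexI[of _ v] bexI[of _ w]) auto
qed

lemma sum_transfer:
  fixes d :: "'a \<Rightarrow> nat"
  assumes "finite W" "v \<in> W" "w \<in> W" "v \<noteq> w" "k \<le> d w"
  defines "d' \<equiv> d(v := d v + k, w := d w - k)"
  shows "sum d' W = sum d W"
    and "0 < k \<Longrightarrow> d v + k < d w \<Longrightarrow> (\<Sum>u\<in>W. d' u ^ 2) < (\<Sum>u\<in>W. d u ^ 2)"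
proof -
  have split: "sum f W = f v + f w + sum f (W - {v, w})" for f :: "'a \<Rightarrow> nat"
  proof -
    have "sum f W = f v + sum f (W - {v})"
      using assms(1,2) by (rule sum.remove)
    also have "sum f (W - {v}) = f w + sum f (W - {v} - {w})"
      using assms(1,3,4) by (intro sum.remove) auto
    finally show ?thesis
      by (simp add: Diff_insert2[symmetric] insert_commute)
  qed
  have rest: "sum (\<lambda>u. f (d' u)) (W - {v, w}) = sum (\<lambda>u. f (d u)) (W - {v, w})" for f :: "nat \<Rightarrow> nat"
    unfolding d'_def by (intro sum.cong) auto
  show "sum d' W = sum d W"
    using split[of d] split[of d'] rest[of id] assms(4,5) unfolding d'_def by simp
  assume "0 < k" "d v + k < d w"
  then obtain c where c: "d w = c + k" "d v < c"
    using assms(5) le_iff_add by (metis add.commute add_less_cancel_right)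
  then have "k * d v < k * c"
    using \<open>0 < k\<close> by simp
  then have "(d v + k)\<^sup>2 + (d w - k)\<^sup>2 < (d v)\<^sup>2 + (d w)\<^sup>2"
    using c(1) by (simp add: power2_eq_square algebra_simps add_strict_mono)
  then show "(\<Sum>u\<in>W. d' u ^ 2) < (\<Sum>u\<in>W. d u ^ 2)"
    using split[of "\<lambda>u. d u ^ 2"] split[of "\<lambda>u. d' u ^ 2"] rest[of "\<lambda>x. x ^ 2"] assms(4)
    unfolding d'_def by simp
qed

theorem orientation_with_outdegree_residues:
  fixes \<rho> :: "'a \<Rightarrow> nat"
  assumes "finite W" "w\<^sub>0 \<in> W" "0 < k" "2 * k \<le> card W + 1"
  shows "\<exists>t. (\<forall>e\<in>complete_edges W. t e \<in> e)
           \<and> (\<forall>w\<in>W - {w\<^sub>0}. card {e \<in> complete_edges W. t e = w} mod k = \<rho> w mod k)"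
proof -
  define N where "N = card W"
  define fits where
    "fits d \<longleftrightarrow> (\<forall>w\<in>W - {w\<^sub>0}. d w mod k = \<rho> w mod k) \<and> sum d W = N choose 2" for d :: "'a \<Rightarrow> nat"
  have "\<exists>d. fits d"
  proof -
    let ?r = "\<lambda>w. \<rho> w mod k"
    have "sum ?r (W - {w\<^sub>0}) \<le> (N - 1) * (k - 1)"
      using sum_bounded_above[of "W - {w\<^sub>0}" ?r "k - 1"] assms(1-3) unfolding N_def
      by (simp add: less_Suc_eq_le[symmetric])
    also have "\<dots> \<le> N choose 2"
    proof -
      have "(N - 1) * (2 * (k - 1)) \<le> (N - 1) * N"
        using assms(4) unfolding N_def by (intro mult_le_mono2) linarith
      then have "2 * ((N - 1) * (k - 1)) \<le> 2 * (N choose 2)"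
        unfolding two_mult_choose_two by (simp add: algebra_simps)
      then show ?thesis
        by simp
    qed
    finally have le: "sum ?r (W - {w\<^sub>0}) \<le> N choose 2" .
    define d where "d = ?r(w\<^sub>0 := (N choose 2) - sum ?r (W - {w\<^sub>0}))"
    have "sum d W = d w\<^sub>0 + sum d (W - {w\<^sub>0})"
      using assms(1,2) by (rule sum.remove)
    also have "sum d (W - {w\<^sub>0}) = sum ?r (W - {w\<^sub>0})"
      unfolding d_def by (intro sum.cong) auto
    finally have "sum d W = N choose 2"
      using le unfolding d_def by simp
    moreover have "\<forall>w\<in>W - {w\<^sub>0}. d w mod k = \<rho> w mod k"
      unfolding d_def by simp
    ultimately show ?thesis
      unfolding fits_def by blast
  qed
  then obtain d where "fits d" and least: "\<And>d'. fits d' \<Longrightarrow> (\<Sum>u\<in>W. d u ^ 2) \<le> (\<Sum>u\<in>W. d' u ^ 2)"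
    using ex_has_least_nat[where m = "\<lambda>d. \<Sum>u\<in>W. d u ^ 2"] by metis
  have "\<forall>S\<subseteq>W. card {e \<in> complete_edges W. e \<subseteq> S} \<le> sum d S"
  proof (intro allI impI, rule ccontr)
    fix S assume "S \<subseteq> W" "\<not> card {e \<in> complete_edges W. e \<subseteq> S} \<le> sum d S"
    then have "sum d S < card S choose 2"
      using assms(1) by (simp add: complete_edges_within card_complete_edges finite_subset)
    then obtain v w where vw: "v \<in> S" "w \<in> W - S" "2 * d v + 2 \<le> card S" "N + card S \<le> 2 * d w"
      using ex_low_and_high_vertex[OF assms(1) \<open>S \<subseteq> W\<close>] \<open>fits d\<close> unfolding fits_def N_def by blast
    then have "d v + k < d w" "k \<le> d w"
      using assms(4) unfolding N_def by linarith+
    define d' where "d' = d(v := d v + k, w := d w - k)"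
    have "v \<in> W" "w \<in> W" "v \<noteq> w"
      using vw \<open>S \<subseteq> W\<close> by auto
    note transfer = sum_transfer[where d = d, OF assms(1) this \<open>k \<le> d w\<close>, folded d'_def]
    have "d' u mod k = d u mod k" for u
      using \<open>k \<le> d w\<close> unfolding d'_def by (auto simp: le_mod_geq)
    then have "fits d'"
      using \<open>fits d\<close> transfer(1) unfolding fits_def by simp
    then show False
      using least transfer(2)[OF assms(3) \<open>d v + k < d w\<close>] by (simp add: not_le[symmetric])
  qed
  moreover have "sum d W = card (complete_edges W)"
    using \<open>fits d\<close> assms(1) unfolding fits_def N_def by (simp add: card_complete_edges)
  ultimately obtain t where t: "\<forall>e\<in>complete_edges W. t e \<in> e"
    "\<forall>w\<in>W. card {e \<in> complete_edges W. t e = w} = d w"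
    using orientation_with_outdegrees[OF assms(1) order_refl] by blast
  with \<open>fits d\<close> show ?thesis
    unfolding fits_def by (intro exI[of _ t]) simp
qed

definition glue_tails :: "'a set \<Rightarrow> 'a set \<Rightarrow> ('a set \<Rightarrow> 'a) \<Rightarrow> ('a set \<Rightarrow> 'a) \<Rightarrow> ('a \<Rightarrow> 'a set)
    \<Rightarrow> 'a set \<Rightarrow> 'a" where
  "glue_tails X R tX tR F e =
     (if e \<subseteq> X then tX e else if e \<subseteq> R then tR e
      else if \<exists>x\<in>X. \<exists>w\<in>F x. e = {x, w} then the_elem (e \<inter> X) else the_elem (e \<inter> R))"

context
  fixes X R :: "'a set" and L :: "'a set set" and tX tR :: "'a set \<Rightarrow> 'a" and F :: "'a \<Rightarrow> 'a set"
  assumes disjoint: "X \<inter> R = {}"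
    and finite: "finite (X \<union> R)"
    and L: "L \<subseteq> complete_edges (X \<union> R)" "complete_edges R \<subseteq> L"
    and tX: "\<forall>e\<in>L. e \<subseteq> X \<longrightarrow> tX e \<in> e"
    and tR: "\<forall>e\<in>complete_edges R. tR e \<in> e"
    and F: "\<forall>x\<in>X. F x \<subseteq> {w \<in> R. {x, w} \<in> L}"
begin

lemma finite_L: "finite L"
  using finite_subset[OF L(1) finite_complete_edges[OF finite]] .

lemma cross_edge:
  assumes "e \<in> L" "\<not> e \<subseteq> X" "\<not> e \<subseteq> R"
  shows "\<exists>x\<in>X. \<exists>w\<in>R. e = {x, w}"
  using assms L(1) unfolding complete_edges_def by auto

lemma glue_tails_cross:
  assumes "x \<in> X" "w \<in> R"
  shows "glue_tails X R tX tR F {x, w} = (if w \<in> F x then x else w)"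
proof -
  have "x \<notin> R" "w \<notin> X"
    using assms disjoint by auto
  have "(\<exists>x'\<in>X. \<exists>w'\<in>F x'. {x, w} = {x', w'}) \<longleftrightarrow> w \<in> F x"
    using F assms(1) \<open>x \<notin> R\<close> by (auto simp: doubleton_eq_iff)
  moreover have "{x, w} \<inter> X = {x}" "{x, w} \<inter> R = {w}"
    using assms \<open>x \<notin> R\<close> \<open>w \<notin> X\<close> by auto
  ultimately show ?thesis
    unfolding glue_tails_def using assms \<open>x \<notin> R\<close> \<open>w \<notin> X\<close> by auto
qed

lemma glue_tails_mem: "\<forall>e\<in>L. glue_tails X R tX tR F e \<in> e"
proof
  fix e assume "e \<in> L"
  show "glue_tails X R tX tR F e \<in> e"
  proof (cases "e \<subseteq> X \<or> e \<subseteq> R")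
    case True
    moreover have "e \<subseteq> R \<Longrightarrow> e \<in> complete_edges R"
      using \<open>e \<in> L\<close> L(1) unfolding complete_edges_eq by auto
    ultimately show ?thesis
      using \<open>e \<in> L\<close> tX tR unfolding glue_tails_def by auto
  next
    case False
    then obtain x w where "x \<in> X" "w \<in> R" "e = {x, w}"
      using cross_edge \<open>e \<in> L\<close> by blast
    then show ?thesis
      using glue_tails_cross by simp
  qed
qed

lemma card_glue_tails_X:
  assumes "x \<in> X"
  shows "card {e \<in> L. glue_tails X R tX tR F e = x} = card {e \<in> L. e \<subseteq> X \<and> tX e = x} + card (F x)"
proof -
  have "{e \<in> L. glue_tails X R tX tR F e = x} = {e \<in> L. e \<subseteq> X \<and> tX e = x} \<union> (\<lambda>w. {x, w}) ` F x"
  proof (intro equalityI subsetI)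
    fix e assume e: "e \<in> {e \<in> L. glue_tails X R tX tR F e = x}"
    show "e \<in> {e \<in> L. e \<subseteq> X \<and> tX e = x} \<union> (\<lambda>w. {x, w}) ` F x"
    proof (cases "e \<subseteq> X \<or> e \<subseteq> R")
      case True
      then show ?thesis
        using e glue_tails_mem assms disjoint unfolding glue_tails_def by auto
    next
      case False
      then obtain x' w where "x' \<in> X" "w \<in> R" "e = {x', w}"
        using cross_edge e by blast
      then show ?thesis
        using e glue_tails_cross assms disjoint by (auto split: if_splits)
    qed
  next
    fix e assume "e \<in> {e \<in> L. e \<subseteq> X \<and> tX e = x} \<union> (\<lambda>w. {x, w}) ` F x"
    then consider "e \<in> L" "e \<subseteq> X" "tX e = x" | w where "w \<in> F x" "e = {x, w}"
      by blast
    then show "e \<in> {e \<in> L. glue_tails X R tX tR F e = x}"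
    proof cases
      case 1
      then show ?thesis
        unfolding glue_tails_def by simp
    next
      case 2
      then have "w \<in> R" "{x, w} \<in> L"
        using F assms by auto
      then show ?thesis
        using glue_tails_cross[OF assms \<open>w \<in> R\<close>] 2 by simp
    qed
  qed
  moreover have "F x \<subseteq> R"
    using F assms by auto
  then have "{e \<in> L. e \<subseteq> X \<and> tX e = x} \<inter> (\<lambda>w. {x, w}) ` F x = {}"
    using disjoint by auto
  moreover have "finite (F x)"
    using \<open>F x \<subseteq> R\<close> finite by (meson finite_Un finite_subset)
  moreover have "card ((\<lambda>w. {x, w}) ` F x) = card (F x)"
    by (rule card_image) (auto simp: inj_on_def doubleton_eq_iff)
  ultimately show ?thesis
    using finite_L by (simp add: card_Un_disjoint)
qed

lemma card_glue_tails_R: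
  assumes "w \<in> R"
  shows "card {e \<in> L. glue_tails X R tX tR F e = w}
           = card {e \<in> complete_edges R. tR e = w} + card {x \<in> X. {x, w} \<in> L \<and> w \<notin> F x}"
proof -
  have edge_R: "e \<in> complete_edges R" if "e \<in> L" "e \<subseteq> R" for e
    using that L(1) unfolding complete_edges_eq by auto
  have not_X: "\<not> e \<subseteq> X" if "e \<in> complete_edges R" for e
    using that disjoint unfolding complete_edges_def by auto
  have "{e \<in> L. glue_tails X R tX tR F e = w}
          = {e \<in> complete_edges R. tR e = w} \<union> (\<lambda>x. {x, w}) ` {x \<in> X. {x, w} \<in> L \<and> w \<notin> F x}"
  proof (intro equalityI subsetI)
    fix e assume e: "e \<in> {e \<in> L. glue_tails X R tX tR F e = w}"
    consider "e \<subseteq> X" | "e \<subseteq> R" | "\<not> e \<subseteq> X" "\<not> e \<subseteq> R"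
      by blast
    then show "e \<in> {e \<in> complete_edges R. tR e = w} \<union> (\<lambda>x. {x, w}) ` {x \<in> X. {x, w} \<in> L \<and> w \<notin> F x}"
    proof cases
      case 1
      then show ?thesis
        using e tX assms disjoint unfolding glue_tails_def by auto
    next
      case 2
      then show ?thesis
        using e edge_R not_X unfolding glue_tails_def by auto
    next
      case 3
      then obtain x w' where "x \<in> X" "w' \<in> R" "e = {x, w'}"
        using cross_edge e by blast
      then show ?thesis
        using e glue_tails_cross assms disjoint by (auto split: if_splits)
    qed
  next
    fix e assume "e \<in> {e \<in> complete_edges R. tR e = w} \<union> (\<lambda>x. {x, w}) ` {x \<in> X. {x, w} \<in> L \<and> w \<notin> F x}"
    then consider "e \<in> complete_edges R" "tR e = w" | x where "x \<in> X" "{x, w} \<in> L" "w \<notin> F x" "e = {x, w}"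
      by blast
    then show "e \<in> {e \<in> L. glue_tails X R tX tR F e = w}"
    proof cases
      case 1
      moreover have "e \<subseteq> R"
        using 1(1) unfolding complete_edges_eq by blast
      ultimately show ?thesis
        using L(2) not_X unfolding glue_tails_def by auto
    next
      case 2
      then show ?thesis
        using glue_tails_cross[OF 2(1) assms] by simp
    qed
  qed
  moreover have "inj_on (\<lambda>x. {x, w}) {x \<in> X. {x, w} \<in> L \<and> w \<notin> F x}"
    by (auto simp: inj_on_def doubleton_eq_iff)
  moreover have "{e \<in> complete_edges R. tR e = w} \<inter> (\<lambda>x. {x, w}) ` {x \<in> X. {x, w} \<in> L \<and> w \<notin> F x} = {}"
    using disjoint unfolding complete_edges_eq by blast
  ultimately show ?thesis
    using finite_L finite by (simp add: card_Un_disjoint card_image finite_complete_edges)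
qed

end

lemma u_bound_eq_if_mod_ne_1:
  assumes "2 \<le> k" "2 \<le> n" "n mod k \<noteq> 1"
  shows "u_bound n k = 2 * int ((n - 2) div k) - 1"
  using assms by (simp add: u_bound_def zdiv_int of_nat_diff)

lemma u_bound_eq_if_mod_eq_1:
  assumes "2 \<le> k" "n mod k = 1"
  shows "n = k * ((n - 1) div k) + 1" "u_bound n k = 2 * int ((n - 1) div k) - 2"
proof -
  have "n - 1 = k * (n div k)"
    using div_mult_mod_eq[of n k] assms(2) by (simp add: mult.commute)
  then have "(n - 1) div k = n div k"
    using assms(1) by simp
  with \<open>n - 1 = k * (n div k)\<close> show n_eq: "n = k * ((n - 1) div k) + 1"
    using assms(2) by (metis One_nat_def Suc_pred' mod_less_eq_dividend not_gr0 not_one_le_zero add.commute plus_1_eq_Suc)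
  have "2 * (int n - 1) = int k * (2 * int ((n - 1) div k))"
    by (subst n_eq) (simp add: algebra_simps)
  then show "u_bound n k = 2 * int ((n - 1) div k) - 2"
    using assms unfolding u_bound_def by simp
qed

lemma le_u_bound_ex_quotient:
  assumes "2 \<le> k" "2 \<le> n" "int m \<le> u_bound n k"
  shows "\<exists>q. int m \<le> 2 * q - 1 \<and> q * int k - 2 * q + 3 \<le> int n - int m"
proof (cases "n mod k = 1")
  case True
  define q where "q = (n - 1) div k"
  have "int n = int q * int k + 1" "int m \<le> 2 * int q - 2"
    using u_bound_eq_if_mod_eq_1[OF assms(1) True] assms(3) unfolding q_def
    by (metis mult.commute of_nat_1 of_nat_add of_nat_mult, simp)
  then show ?thesis
    by (intro exI[of _ "int q"]) linarith
next
  case False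
  define q where "q = (n - 2) div k"
  have "n = q * k + (n - 2) mod k + 2"
    unfolding q_def using assms(2) by simp
  then have "int q * int k + 2 \<le> int n"
    by (metis le_add1 add_le_mono1 of_nat_add of_nat_le_iff of_nat_mult of_nat_numeral)
  moreover have "int m \<le> 2 * int q - 1"
    using u_bound_eq_if_mod_ne_1[OF assms(1,2) False] assms(3) unfolding q_def by simp
  ultimately show ?thesis
    by (intro exI[of _ "int q"]) linarith
qed

lemma le_u_bound_imp_less:
  assumes "2 \<le> k" "2 \<le> n" "int m \<le> u_bound n k" "2 * c \<le> m"
  shows "int m + int k + (int k - 2) * int c < int n"
proof -
  obtain q where q: "int m \<le> 2 * q - 1" "q * int k - 2 * q + 3 \<le> int n - int m"
    using le_u_bound_ex_quotient[OF assms(1-3)] by blast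
  have "int c \<le> q - 1"
    using q(1) assms(4) by linarith
  then have "(int k - 2) * int c \<le> (int k - 2) * (q - 1)"
    using assms(1) by (intro mult_left_mono) auto
  then show ?thesis
    using q(2) by (simp add: algebra_simps)
qed

lemma le_u_bound_imp_le:
  assumes "2 \<le> k" "2 * k \<le> n" "int m \<le> u_bound n k"
  shows "m + 2 * k \<le> n + 1"
proof (cases "2 \<le> m")
  case True
  then have "int m + int k + (int k - 2) < int n"
    using le_u_bound_imp_less[OF assms(1) _ assms(3), of 1] assms(1,2) by simp
  then show ?thesis
    by linarith
next
  case False
  then show ?thesis
    using assms(2) by linarith
qed

locale small_partial_kstar_design =
  fixes k n :: nat and V :: "'a set" and A :: "'a set set set"
  assumes k: "2 \<le> k" and n: "2 * k \<le> n" and finite_V: "finite V" and card_V: "card V = n"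
    and design: "partial_kstar_design k V A" and few_stars: "int (card A) \<le> u_bound n k"
begin

definition centre :: "'a set set \<Rightarrow> 'a" where
  "centre S = (SOME c. \<exists>L. c \<in> V \<and> L \<subseteq> V \<and> c \<notin> L \<and> finite L \<and> card L = k \<and> S = (\<lambda>l. {c, l}) ` L)"

lemma centre:
  assumes "S \<in> A"
  shows "\<exists>L. centre S \<in> V \<and> L \<subseteq> V \<and> centre S \<notin> L \<and> S = (\<lambda>l. {centre S, l}) ` L"
proof -
  have "\<exists>c L. c \<in> V \<and> L \<subseteq> V \<and> c \<notin> L \<and> finite L \<and> card L = k \<and> S = (\<lambda>l. {c, l}) ` L"
    using design assms unfolding partial_kstar_design_def is_kstar_def by simp
  then have "\<exists>L. centre S \<in> V \<and> L \<subseteq> V \<and> centre S \<notin> L \<and> finite L \<and> card L = k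
               \<and> S = (\<lambda>l. {centre S, l}) ` L"
    unfolding centre_def by (rule someI_ex)
  then show ?thesis
    by (elim exE) (intro exI, elim conjE, (intro conjI; assumption))
qed

lemma centre_in_V:
  assumes "S \<in> A"
  shows "centre S \<in> V"
  using centre[OF assms] by (elim exE conjE) assumption

lemma edge_eq_centre:
  assumes "S \<in> A" "e \<in> S"
  shows "\<exists>l\<in>V. l \<noteq> centre S \<and> e = {centre S, l}"
proof -
  obtain L where L: "L \<subseteq> V" "centre S \<notin> L" "S = (\<lambda>l. {centre S, l}) ` L"
    using centre[OF assms(1)] by (elim exE conjE)
  have "e \<in> (\<lambda>l. {centre S, l}) ` L"
    using assms(2) L(3) by simp
  then obtain l where "l \<in> L" "e = {centre S, l}"
    by (rule imageE)
  with L(1,2) show ?thesis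
    by (intro bexI[of _ l]) auto
qed

definition centres :: "'a set" where
  "centres = centre ` A"

definition noncentres :: "'a set" where
  "noncentres = V - centres"

definition stars_at :: "'a \<Rightarrow> 'a set set set" where
  "stars_at x = {S \<in> A. centre S = x}"

definition free_nbrs :: "'a \<Rightarrow> 'a set" where
  "free_nbrs x = {w \<in> noncentres. {x, w} \<notin> \<Union>A}"

lemma finite_A: "finite A"
  using finite_partial_kstar_design[OF finite_V design] .

lemma centres_subset: "centres \<subseteq> V"
  unfolding centres_def using centre_in_V by blast

lemma finite_centres: "finite centres"
  unfolding centres_def using finite_A by simp

lemma centres_noncentres: "centres \<inter> noncentres = {}" "centres \<union> noncentres = V"
  unfolding noncentres_def using centres_subset by auto

lemma edge_not_within_noncentres:
  assumes "e \<in> \<Union>A"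
  shows "\<not> e \<subseteq> noncentres"
proof -
  obtain S where "S \<in> A" "e \<in> S"
    using assms by blast
  then have "centre S \<in> e" "centre S \<in> centres"
    using edge_eq_centre unfolding centres_def by fastforce+
  then show ?thesis
    using centres_noncentres(1) by blast
qed

lemma stars_at_cross_edge:
  assumes "w \<in> noncentres" "S \<in> A" "{x, w} \<in> S"
  shows "S \<in> stars_at x"
proof -
  obtain l where "{x, w} = {centre S, l}"
    using edge_eq_centre[OF assms(2,3)] by blast
  moreover have "centre S \<noteq> w"
    using assms(1,2) unfolding noncentres_def centres_def by auto
  ultimately show ?thesis
    using assms(2) unfolding stars_at_def by (auto simp: doubleton_eq_iff)
qed

lemma card_noncentres_eq: "card noncentres = n - card centres"
  unfolding noncentres_def using card_V centres_subset finite_centres by (simp add: card_Diff_subset)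

lemma card_noncentres: "2 * k \<le> card noncentres + 1"
proof -
  have "card centres \<le> card A"
    unfolding centres_def using finite_A by (rule card_image_le)
  then show ?thesis
    using le_u_bound_imp_le[OF k n few_stars] card_noncentres_eq by linarith
qed

lemma card_noncentres_le:
  assumes "x \<in> centres"
  shows "card noncentres \<le> card (free_nbrs x) + k * card (stars_at x)"
proof -
  let ?used = "{w \<in> noncentres. {x, w} \<in> \<Union>A}"
  have "finite noncentres"
    unfolding noncentres_def using finite_V by simp
  moreover have "noncentres = free_nbrs x \<union> ?used" "free_nbrs x \<inter> ?used = {}"
    unfolding free_nbrs_def by blast+
  ultimately have "card noncentres = card (free_nbrs x) + card ?used"
    by (metis card_Un_disjoint finite_Un)
  moreover have "card ?used \<le> card (\<Union>(stars_at x))"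
  proof -
    have "{x, w} \<in> \<Union>(stars_at x)" if w: "w \<in> ?used" for w
    proof -
      obtain S where "S \<in> A" "{x, w} \<in> S"
        using w by blast
      then show ?thesis
        using stars_at_cross_edge w by blast
    qed
    then have "(\<lambda>w. {x, w}) ` ?used \<subseteq> \<Union>(stars_at x)"
      by blast
    moreover have "finite (\<Union>(stars_at x))"
    proof (rule finite_subset)
      show "\<Union>(stars_at x) \<subseteq> complete_edges V"
        using Union_subset_complete_edges[OF design] unfolding stars_at_def by blast
    qed (rule finite_complete_edges[OF finite_V])
    ultimately have "card ((\<lambda>w. {x, w}) ` ?used) \<le> card (\<Union>(stars_at x))"
      by (rule card_mono[rotated])
    moreover have "card ((\<lambda>w. {x, w}) ` ?used) = card ?used"
      by (rule card_image) (auto simp: inj_on_def doubleton_eq_iff)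
    ultimately show ?thesis
      by simp
  qed
  moreover have "card (\<Union>(stars_at x)) \<le> k * card (stars_at x)"
  proof -
    have "card (\<Union>(stars_at x)) \<le> (\<Sum>S\<in>stars_at x. card S)"
      by (rule card_Union_le_sum_card)
    also have "\<dots> = (\<Sum>S\<in>stars_at x. k)"
    proof (rule sum.cong)
      fix S assume "S \<in> stars_at x"
      then have "is_kstar k V S"
        using design unfolding stars_at_def partial_kstar_design_def by simp
      then show "card S = k"
        by (rule card_kstar)
    qed (rule refl)
    finally show ?thesis
      by (simp add: mult.commute)
  qed
  ultimately show ?thesis
    by linarith
qed

lemma card_A_eq_sum_stars_at: "card A = (\<Sum>x\<in>centres. card (stars_at x))"
  unfolding stars_at_def centres_def using finite_A
  by (intro sum_card_fibres[symmetric]) auto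

lemma stars_at_nonempty: "x \<in> centres \<Longrightarrow> 1 \<le> card (stars_at x)"
  unfolding centres_def stars_at_def using finite_A by (auto simp: Suc_le_eq card_gt_0_iff)

definition deficient :: "'a set" where
  "deficient = {x \<in> centres. card (free_nbrs x) + 2 \<le> k}"

lemma deficient_unique:
  assumes "x \<in> deficient" "y \<in> deficient"
  shows "x = y"
proof (rule ccontr)
  assume "x \<noteq> y"
  have xy: "{x, y} \<subseteq> centres"
    using assms unfolding deficient_def by auto
  define p where "p = card centres"
  define c where "c = min (card (stars_at x)) (card (stars_at y))"
  have "p \<le> n"
    unfolding p_def card_V[symmetric] using centres_subset finite_V by (rule card_mono[rotated])
  have "2 \<le> p"
    using card_mono[OF finite_centres xy] \<open>x \<noteq> y\<close> unfolding p_def by simp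
  have "card A = (\<Sum>z\<in>centres - {x, y}. card (stars_at z)) + (\<Sum>z\<in>{x, y}. card (stars_at z))"
    unfolding card_A_eq_sum_stars_at using xy finite_centres by (rule sum.subset_diff)
  moreover have "of_nat (card (centres - {x, y})) * 1 \<le> (\<Sum>z\<in>centres - {x, y}. card (stars_at z))"
    using stars_at_nonempty by (intro sum_bounded_below) auto
  moreover have "card (centres - {x, y}) = p - 2"
    unfolding p_def using finite_centres xy \<open>x \<noteq> y\<close> by (simp add: card_Diff_subset)
  ultimately have "p + 2 * c \<le> card A + 2"
    using \<open>x \<noteq> y\<close> \<open>2 \<le> p\<close> unfolding c_def by simp
  moreover have "n + 2 \<le> p + k + k * c"
  proof -
    have "n - p \<le> card (free_nbrs z) + k * card (stars_at z)" if "z \<in> {x, y}" for z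
      using card_noncentres_le[of z] card_noncentres_eq that xy unfolding p_def by auto
    moreover have "card (free_nbrs z) + 2 \<le> k" if "z \<in> {x, y}" for z
      using assms that unfolding deficient_def by auto
    moreover have "c = card (stars_at x) \<or> c = card (stars_at y)"
      unfolding c_def by linarith
    ultimately have "n - p + 2 \<le> k + k * c"
      by fastforce
    then show ?thesis
      using \<open>p \<le> n\<close> by linarith
  qed
  ultimately have "n + 2 * c \<le> card A + k + k * c"
    by linarith
  then have "int n + 2 * int c \<le> int (card A) + int k + int k * int c"
    by (metis of_nat_add of_nat_le_iff of_nat_mult of_nat_numeral)
  moreover have "int (card A) + int k + (int k - 2) * int c < int n"
    using le_u_bound_imp_less[OF k _ few_stars] \<open>p + 2 * c \<le> card A + 2\<close> \<open>2 \<le> p\<close> \<open>p \<le> n\<close>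
    by simp
  ultimately show False
    by (simp add: algebra_simps)
qed

lemma ex_tails_centres:
  "\<exists>tX F. (\<forall>e\<in>complete_edges centres. tX e \<in> e)
     \<and> (\<forall>x\<in>centres. F x \<subseteq> free_nbrs x
                     \<and> k dvd card {e \<in> leave V A. e \<subseteq> centres \<and> tX e = x} + card (F x))"
proof -
  define tX where "tX e = (SOME z. z \<in> e - deficient)" for e :: "'a set"
  have tX: "tX e \<in> e - deficient" if e: "e \<in> complete_edges centres" for e
  proof -
    obtain a b where "e = {a, b}" "a \<noteq> b"
      using e unfolding complete_edges_def by auto
    then obtain z where "z \<in> e - deficient"
      using deficient_unique by blast
    then show ?thesis
      unfolding tX_def by (rule someI)
  qed
  define out where "out x = card {e \<in> leave V A. e \<subseteq> centres \<and> tX e = x}" for x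
  have "(k - 1) * out x mod k \<le> card (free_nbrs x)" if "x \<in> centres" for x
  proof (cases "x \<in> deficient")
    case True
    have "{e \<in> leave V A. e \<subseteq> centres \<and> tX e = x} = {}"
      using tX True unfolding leave_def complete_edges_eq by fastforce
    then have "out x = 0"
      unfolding out_def by (simp only: card.empty)
    then show ?thesis
      by simp
  next
    case False
    then have "k - 1 \<le> card (free_nbrs x)"
      using that unfolding deficient_def by auto
    moreover have "(k - 1) * out x mod k < k"
      using k by simp
    ultimately show ?thesis
      by linarith
  qed
  then have "\<forall>x\<in>centres. \<exists>F. F \<subseteq> free_nbrs x \<and> card F = (k - 1) * out x mod k"
    by (meson obtain_subset_with_card_n)
  then obtain F where F: "\<And>x. x \<in> centres \<Longrightarrow> F x \<subseteq> free_nbrs x \<and> card (F x) = (k - 1) * out x mod k"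
    by metis
  have "k dvd out x + card (F x)" if "x \<in> centres" for x
  proof -
    have "(out x + (k - 1) * out x mod k) mod k = (out x + (k - 1) * out x) mod k"
      by (simp add: mod_add_right_eq)
    also have "out x + (k - 1) * out x = k * out x"
      using k by (cases k) auto
    finally show ?thesis
      using F[OF that] by (simp add: dvd_eq_mod_eq_0)
  qed
  then show ?thesis
    using tX F unfolding out_def by (intro exI[of _ tX] exI[of _ F]) auto
qed

lemma ex_orientation_dvd_but_one:
  "\<exists>t. \<exists>w\<^sub>0\<in>V. (\<forall>e\<in>leave V A. t e \<in> e) \<and> (\<forall>v\<in>V - {w\<^sub>0}. k dvd card {e \<in> leave V A. t e = v})"
proof -
  obtain tX F where tX: "\<forall>e\<in>complete_edges centres. tX e \<in> e"
    and F: "\<forall>x\<in>centres. F x \<subseteq> free_nbrs x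
                         \<and> k dvd card {e \<in> leave V A. e \<subseteq> centres \<and> tX e = x} + card (F x)"
    using ex_tails_centres by blast
  define out_cross where "out_cross w = card {x \<in> centres. {x, w} \<in> leave V A \<and> w \<notin> F x}" for w
  have "finite noncentres"
    unfolding noncentres_def using finite_V by simp
  moreover obtain w\<^sub>0 where "w\<^sub>0 \<in> noncentres"
    using card_noncentres k by fastforce
  ultimately obtain tR where tR: "\<forall>e\<in>complete_edges noncentres. tR e \<in> e"
    and tR_out: "\<forall>w\<in>noncentres - {w\<^sub>0}.
                   card {e \<in> complete_edges noncentres. tR e = w} mod k = (k - 1) * out_cross w mod k"
    using orientation_with_outdegree_residues[of noncentres w\<^sub>0 k "\<lambda>w. (k - 1) * out_cross w"]
      card_noncentres k by auto
  have fin: "finite (centres \<union> noncentres)"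
    using finite_V centres_noncentres(2) by simp
  have L: "leave V A \<subseteq> complete_edges (centres \<union> noncentres)"
    unfolding leave_def centres_noncentres(2) by blast
  have L_noncentres: "complete_edges noncentres \<subseteq> leave V A"
    using edge_not_within_noncentres centres_noncentres(2)
    unfolding leave_def complete_edges_eq by blast
  have tX_leave: "\<forall>e\<in>leave V A. e \<subseteq> centres \<longrightarrow> tX e \<in> e"
    using tX unfolding leave_def complete_edges_eq by blast
  have F_leave: "\<forall>x\<in>centres. F x \<subseteq> {w \<in> noncentres. {x, w} \<in> leave V A}"
    using F centres_noncentres unfolding free_nbrs_def leave_def complete_edges_def by blast
  note glue = centres_noncentres(1) fin L L_noncentres tX_leave tR F_leave
  define t where "t = glue_tails centres noncentres tX tR F"
  have "k dvd card {e \<in> leave V A. t e = v}" if "v \<in> V - {w\<^sub>0}" for v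
  proof (cases "v \<in> centres")
    case True
    then show ?thesis
      unfolding t_def card_glue_tails_X[OF glue True] using F by blast
  next
    case False
    then have v: "v \<in> noncentres - {w\<^sub>0}"
      using that centres_noncentres(2) by blast
    let ?out = "card {e \<in> complete_edges noncentres. tR e = v}"
    have "(?out + out_cross v) mod k = (?out mod k + out_cross v) mod k"
      by (rule mod_add_left_eq[symmetric])
    also have "?out mod k = (k - 1) * out_cross v mod k"
      using tR_out v by blast
    also have "((k - 1) * out_cross v mod k + out_cross v) mod k = ((k - 1) * out_cross v + out_cross v) mod k"
      by (rule mod_add_left_eq)
    also have "(k - 1) * out_cross v + out_cross v = k * out_cross v"
      using k by (cases k) auto
    finally show ?thesis
      unfolding t_def card_glue_tails_R[OF glue DiffD1[OF v]] out_cross_def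
      by (simp add: dvd_eq_mod_eq_0)
  qed
  moreover have "\<forall>e\<in>leave V A. t e \<in> e"
    unfolding t_def by (rule glue_tails_mem[OF glue])
  moreover have "w\<^sub>0 \<in> V"
    using \<open>w\<^sub>0 \<in> noncentres\<close> unfolding noncentres_def by blast
  ultimately show ?thesis
    by (intro exI[of _ t] bexI[of _ w\<^sub>0]) auto
qed

theorem completion_exists:
  assumes "k_admissible k n"
  shows "has_completion k V A"
proof -
  obtain t w\<^sub>0 where w\<^sub>0: "w\<^sub>0 \<in> V" and t: "\<forall>e\<in>leave V A. t e \<in> e"
    and dvd: "\<forall>v\<in>V - {w\<^sub>0}. k dvd card {e \<in> leave V A. t e = v}"
    using ex_orientation_dvd_but_one by blast
  have "t ` leave V A \<subseteq> V"
    using t unfolding leave_def complete_edges_eq by blast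
  moreover have "finite (leave V A)"
    unfolding leave_def by (simp add: finite_complete_edges[OF finite_V])
  moreover have "k dvd card (leave V A)"
    using assms card_leave[OF finite_V design] card_V unfolding k_admissible_def
    by (simp add: dvd_diff_nat mod_eq_0_iff_dvd)
  ultimately have "k dvd card {e \<in> leave V A. t e = w\<^sub>0}"
    using dvd_card_last_fibre[OF finite_V _ _ w\<^sub>0 _ dvd] by blast
  then have "\<forall>v\<in>V. k dvd card {e \<in> leave V A. t e = v}"
    using dvd by blast
  then show ?thesis
    using has_completion_if_outdegrees_dvd[OF _ finite_V design t] k by simp
qed

end

lemma not_has_completion_if_free_edge_deficient:
  assumes "finite V" "partial_kstar_design k V A" "{a, b} \<in> leave V A"
    and deficient: "\<forall>c\<in>{a, b}. card {l \<in> V. {c, l} \<in> leave V A} < k"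
  shows "\<not> has_completion k V A"
proof
  assume "has_completion k V A"
  then obtain B where B: "partial_kstar_design k V B" "\<Union>B = complete_edges V" "A \<subseteq> B"
    unfolding has_completion_def kstar_design_def by blast
  then have "{a, b} \<in> \<Union>B"
    using assms(3) unfolding leave_def by blast
  then obtain T where T: "T \<in> B" "{a, b} \<in> T"
    by blast
  then have "is_kstar k V T"
    using B(1) unfolding partial_kstar_design_def by simp
  then obtain c L where cL: "c \<in> V" "L \<subseteq> V" "c \<notin> L" "finite L" "card L = k" "T = (\<lambda>l. {c, l}) ` L"
    unfolding is_kstar_def by blast
  have "c \<in> {a, b}"
    using T(2) unfolding cL(6) by auto
  have disj: "S \<inter> T = {}" if "S \<in> A" for S
  proof -
    have "T \<notin> A"
      using T(2) assms(3) unfolding leave_def by blast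
    then have "S \<in> B" "S \<noteq> T"
      using that B(3) by auto
    then show ?thesis
      using B(1) T(1) unfolding partial_kstar_design_def by simp
  qed
  have "L \<subseteq> {l \<in> V. {c, l} \<in> leave V A}"
  proof
    fix l assume "l \<in> L"
    then have "{c, l} \<in> T" "l \<in> V" "l \<noteq> c"
      using cL by auto
    then show "l \<in> {l \<in> V. {c, l} \<in> leave V A}"
      using disj cL(1) unfolding leave_def complete_edges_def by blast
  qed
  then have "card L \<le> card {l \<in> V. {c, l} \<in> leave V A}"
    by (rule card_mono[rotated]) (use assms(1) in simp)
  then show False
    using deficient \<open>c \<in> {a, b}\<close> cL(5) by auto
qed

definition block_star :: "nat \<Rightarrow> nat \<Rightarrow> nat \<Rightarrow> nat \<Rightarrow> nat set set" where
  "block_star k s c j = (\<lambda>l. {c, l}) ` {s + j * k ..< s + j * k + k}"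

definition block_stars :: "nat \<Rightarrow> nat \<Rightarrow> nat \<Rightarrow> nat set set set" where
  "block_stars k s q = (\<lambda>(c, j). block_star k s c j) ` ({..<2} \<times> {..<q})"

lemma block_index:
  fixes s j k l :: nat
  assumes "s + j * k \<le> l" "l < s + j * k + k"
  shows "(l - s) div k = j"
proof -
  define r where "r = l - (s + j * k)"
  have "l - s = r + j * k" "r < k" "0 < k"
    using assms unfolding r_def by linarith+
  then show ?thesis
    by simp
qed

lemma block_star_disjoint:
  assumes "c < s" "c' < s" "block_star k s c j \<inter> block_star k s c' j' \<noteq> {}"
  shows "c = c' \<and> j = j'"
proof -
  obtain e where e: "e \<in> block_star k s c j" "e \<in> block_star k s c' j'"
    using assms(3) by blast
  obtain l where l: "s + j * k \<le> l" "l < s + j * k + k" "e = {c, l}"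
    using e(1) unfolding block_star_def by auto
  obtain l' where l': "s + j' * k \<le> l'" "l' < s + j' * k + k" "e = {c', l'}"
    using e(2) unfolding block_star_def by auto
  have "{c, l} = {c', l'}"
    using l(3) l'(3) by simp
  then have "c = c'" "l = l'"
    using assms(1,2) l(1) l'(1) by (auto simp: doubleton_eq_iff)
  moreover have "j = j'"
    using block_index[OF l(1,2)] block_index[OF l'(1,2)] \<open>l = l'\<close> by simp
  ultimately show ?thesis
    by simp
qed

lemma block_stars:
  assumes "0 < k" "2 \<le> s" "s + q * k \<le> n"
  shows "partial_kstar_design k {..<n} (block_stars k s q)"
    and "card (block_stars k s q) = 2 * q"
    and "\<Union>(block_stars k s q) = {{c, l} | c l. c < 2 \<and> s \<le> l \<and> l < s + q * k}"
proof -
  have block_le: "j * k + k \<le> q * k" if "j < q" for j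
  proof -
    have "(j + 1) * k \<le> q * k"
      using that by (intro mult_le_mono1) simp
    then show ?thesis
      by simp
  qed
  show "partial_kstar_design k {..<n} (block_stars k s q)"
    unfolding partial_kstar_design_def
  proof (intro conjI ballI impI)
    fix S assume "S \<in> block_stars k s q"
    then obtain c j where "c < 2" "j < q" "S = block_star k s c j"
      unfolding block_stars_def by auto
    then show "is_kstar k {..<n} S"
      unfolding is_kstar_def block_star_def using assms block_le[of j]
      by (intro exI[of _ c] exI[of _ "{s + j * k ..< s + j * k + k}"]) auto
  next
    fix S T assume ST: "S \<in> block_stars k s q" "T \<in> block_stars k s q" "S \<noteq> T"
    obtain c j where "c < 2" "S = block_star k s c j"
      using ST(1) unfolding block_stars_def by auto
    moreover obtain c' j' where "c' < 2" "T = block_star k s c' j'"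
      using ST(2) unfolding block_stars_def by auto
    ultimately show "S \<inter> T = {}"
      using block_star_disjoint[of c s c' k j j'] assms(2) \<open>S \<noteq> T\<close> by auto
  qed
  have "inj_on (\<lambda>(c, j). block_star k s c j) ({..<2} \<times> {..<q})"
  proof (rule inj_onI, clarify)
    fix c j c' j' assume "c < 2" "c' < 2" "block_star k s c j = block_star k s c' j'"
    moreover have "block_star k s c j \<noteq> {}"
      using assms(1) unfolding block_star_def by simp
    ultimately show "c = c' \<and> j = j'"
      using block_star_disjoint[of c s c' k j j'] assms(2) by auto
  qed
  then show "card (block_stars k s q) = 2 * q"
    unfolding block_stars_def by (simp add: card_image card_cartesian_product)
  show "\<Union>(block_stars k s q) = {{c, l} | c l. c < 2 \<and> s \<le> l \<and> l < s + q * k}"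
  proof (intro equalityI subsetI)
    fix e assume "e \<in> \<Union>(block_stars k s q)"
    then obtain c j l where "c < 2" "j < q" "s + j * k \<le> l" "l < s + j * k + k" "e = {c, l}"
      unfolding block_stars_def block_star_def by auto
    moreover have "l < s + q * k"
      using block_le[of j] \<open>j < q\<close> \<open>l < s + j * k + k\<close> by linarith
    ultimately show "e \<in> {{c, l} | c l. c < 2 \<and> s \<le> l \<and> l < s + q * k}"
      by auto
  next
    fix e assume "e \<in> {{c, l} | c l. c < 2 \<and> s \<le> l \<and> l < s + q * k}"
    then obtain c l where cl: "c < 2" "s \<le> l" "l < s + q * k" "e = {c, l}"
      by blast
    define j where "j = (l - s) div k"
    have "j * k + (l - s) mod k = l - s"
      unfolding j_def by (rule div_mult_mod_eq)
    moreover have "(l - s) mod k < k"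
      using assms(1) by simp
    ultimately have "j * k \<le> l - s" "l - s < j * k + k"
      by linarith+
    moreover have "j < q"
      unfolding j_def using cl assms(1) by (simp add: less_mult_imp_div_less)
    ultimately have "l \<in> {s + j * k ..< s + j * k + k}"
      using cl(2) by (simp, linarith)
    then have "e \<in> block_star k s c j"
      unfolding block_star_def cl(4) by (rule imageI)
    moreover have "block_star k s c j \<in> block_stars k s q"
      unfolding block_stars_def by (rule image_eqI[of _ _ "(c, j)"]) (use cl(1) \<open>j < q\<close> in auto)
    ultimately show "e \<in> \<Union>(block_stars k s q)"
      by blast
  qed
qed

lemma not_has_completion_two_centres:
  assumes "partial_kstar_design k {..<n} A" "2 \<le> n" "{0, 1} \<notin> \<Union>A"
    and covered: "\<And>c l. c < 2 \<Longrightarrow> 2 \<le> l \<Longrightarrow> l < t \<Longrightarrow> {c, l} \<in> \<Union>A"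
    and "1 + (n - t) < k"
  shows "\<not> has_completion k {..<n} A"
proof (rule not_has_completion_if_free_edge_deficient[OF _ assms(1)])
  show "{0, 1} \<in> leave {..<n} A"
    using assms(2,3) unfolding leave_def complete_edges_eq by simp
  have "card {l \<in> {..<n}. {c, l} \<in> leave {..<n} A} < k" if "c \<in> {0, 1}" for c :: nat
  proof -
    have "{l \<in> {..<n}. {c, l} \<in> leave {..<n} A} \<subseteq> {1 - c} \<union> {t..<n}"
    proof
      fix l assume l: "l \<in> {l \<in> {..<n}. {c, l} \<in> leave {..<n} A}"
      then have "l < n" "l \<noteq> c" "{c, l} \<notin> \<Union>A"
        unfolding leave_def complete_edges_def by (auto simp: doubleton_eq_iff)
      show "l \<in> {1 - c} \<union> {t..<n}"
      proof (cases "2 \<le> l \<and> l < t")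
        case True
        moreover have "c < 2"
          using that by auto
        ultimately show ?thesis
          using covered[of c l] \<open>{c, l} \<notin> \<Union>A\<close> by blast
      next
        case False
        then show ?thesis
          using \<open>l < n\<close> \<open>l \<noteq> c\<close> that by auto
      qed
    qed
    then have "card {l \<in> {..<n}. {c, l} \<in> leave {..<n} A} \<le> card ({1 - c} \<union> {t..<n})"
      by (rule card_mono[rotated]) simp
    also have "\<dots> \<le> 1 + (n - t)"
      using card_Un_le[of "{1 - c}" "{t..<n}"] by simp
    finally show ?thesis
      using assms(5) by linarith
  qed
  then show "\<forall>c\<in>{0, 1}. card {l \<in> {..<n}. {c, l} \<in> leave {..<n} A} < k"
    by blast
qed simp

lemma counterexample_mod_ne_1:
  assumes "2 \<le> k" "2 \<le> n" "n mod k \<noteq> 1"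
  shows "\<exists>A. partial_kstar_design k {..<n} A \<and> finite A \<and> int (card A) = u_bound n k + 1
             \<and> \<not> has_completion k {..<n} A"
proof -
  define q where "q = (n - 2) div k"
  have n_eq: "n = 2 + q * k + (n - 2) mod k"
    unfolding q_def using assms(2) by simp
  have "(n - 2) mod k \<noteq> k - 1"
  proof
    assume "(n - 2) mod k = k - 1"
    then have "n = (q + 1) * k + 1"
      using n_eq assms(1) by simp
    then have "n mod k = 1 mod k"
      by (simp only: mod_mult_self3)
    then show False
      using assms by simp
  qed
  then have "(n - 2) mod k + 2 \<le> k"
    using mod_less_divisor[of k "n - 2"] assms(1) by linarith
  note blocks = block_stars[of k 2 q n]
  have "2 + q * k \<le> n"
    using n_eq by linarith
  then have design: "partial_kstar_design k {..<n} (block_stars k 2 q)"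
    and card: "card (block_stars k 2 q) = 2 * q"
    and Union: "\<Union>(block_stars k 2 q) = {{c, l} | c l. c < 2 \<and> 2 \<le> l \<and> l < 2 + q * k}"
    using blocks assms(1) by auto
  have "\<not> has_completion k {..<n} (block_stars k 2 q)"
  proof (rule not_has_completion_two_centres[OF design assms(2)])
    show "{0, 1} \<notin> \<Union>(block_stars k 2 q)"
      unfolding Union by (auto simp: doubleton_eq_iff)
    show "{c, l} \<in> \<Union>(block_stars k 2 q)" if "c < 2" "2 \<le> l" "l < 2 + q * k" for c l
      unfolding Union using that by blast
    show "1 + (n - (2 + q * k)) < k"
      using n_eq \<open>(n - 2) mod k + 2 \<le> k\<close> by linarith
  qed
  moreover have "finite (block_stars k 2 q)"
    unfolding block_stars_def by simp
  moreover have "int (card (block_stars k 2 q)) = u_bound n k + 1"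
    unfolding card u_bound_eq_if_mod_ne_1[OF assms] q_def[symmetric] by simp
  ultimately show ?thesis
    using design by blast
qed

lemma counterexample_mod_eq_1:
  assumes "2 \<le> k" "2 \<le> n" "n mod k = 1"
  shows "\<exists>A. partial_kstar_design k {..<n} A \<and> finite A \<and> int (card A) = u_bound n k + 1
             \<and> \<not> has_completion k {..<n} A"
proof -
  define p where "p = (n - 1) div k - 1"
  have "1 \<le> (n - 1) div k"
    using u_bound_eq_if_mod_eq_1(1)[OF assms(1,3)] assms(2) by (cases "(n - 1) div k") auto
  then have n_eq: "n = k * p + k + 1" and u: "u_bound n k = 2 * int p"
    using u_bound_eq_if_mod_eq_1[OF assms(1,3)] unfolding p_def
    by (auto simp: algebra_simps of_nat_diff)
  define leaves where "leaves = {0, 1} \<union> {3..<k + 1}"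
  define S where "S = (\<lambda>l. {2 :: nat, l}) ` leaves"
  have "card leaves = k"
    unfolding leaves_def using assms(1) by (subst card_Un_disjoint) auto
  then have "is_kstar k {..<n} S"
    unfolding is_kstar_def S_def using n_eq assms(1)
    by (intro exI[of _ 2] exI[of _ leaves]) (auto simp: leaves_def)
  then have design_S: "partial_kstar_design k {..<n} {S}"
    unfolding partial_kstar_design_def by simp
  have "3 + p * k \<le> n"
    using n_eq assms(1) by (simp add: algebra_simps)
  then have design_blocks: "partial_kstar_design k {..<n} (block_stars k 3 p)"
    and card: "card (block_stars k 3 p) = 2 * p"
    and Union: "\<Union>(block_stars k 3 p) = {{c, l} | c l. c < 2 \<and> 3 \<le> l \<and> l < 3 + p * k}"
    using block_stars[of k 3 p n] assms(1) by auto
  have S_disjoint: "S \<inter> \<Union>(block_stars k 3 p) = {}"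
    unfolding S_def Union by (auto simp: doubleton_eq_iff)
  define A where "A = insert S (block_stars k 3 p)"
  have "\<Union>{S} \<inter> \<Union>(block_stars k 3 p) = {}"
    using S_disjoint by simp
  then have design: "partial_kstar_design k {..<n} A"
    unfolding A_def using partial_kstar_design_Un[OF design_S design_blocks] by simp
  have "\<not> has_completion k {..<n} A"
  proof (rule not_has_completion_two_centres[OF design assms(2)])
    have "2 \<in> e" if "e \<in> S" for e
      using that unfolding S_def by blast
    then have "{0, 1} \<notin> S"
      by fastforce
    moreover have "{0, 1} \<notin> \<Union>(block_stars k 3 p)"
      unfolding Union by (auto simp: doubleton_eq_iff)
    ultimately show "{0, 1} \<notin> \<Union>A"
      unfolding A_def by blast
    show "{c, l} \<in> \<Union>A" if "c < 2" "2 \<le> l" "l < 3 + p * k" for c l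
    proof (cases "l = 2")
      case True
      have "{2, c} \<in> S"
        using that(1) unfolding S_def leaves_def by auto
      moreover have "{c, l} = {2, c}"
        using True by (simp add: insert_commute)
      ultimately show ?thesis
        unfolding A_def by simp
    next
      case False
      then have "3 \<le> l"
        using that(2) by simp
      then have "{c, l} \<in> \<Union>(block_stars k 3 p)"
        unfolding Union using that(1,3) by blast
      then show ?thesis
        unfolding A_def by simp
    qed
    show "1 + (n - (3 + p * k)) < k"
      using n_eq assms(1) by (simp add: algebra_simps)
  qed
  moreover have "S \<notin> block_stars k 3 p"
  proof -
    have "{2, 0} \<in> S"
      unfolding S_def leaves_def by blast
    then show ?thesis
      using S_disjoint by blast
  qed
  then have "int (card A) = u_bound n k + 1"
    unfolding A_def u using card by (simp add: block_stars_def)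
  moreover have "finite A"
    unfolding A_def block_stars_def by simp
  ultimately show ?thesis
    using design by blast
qed

theorem theorem1:
  fixes k :: nat
  assumes "k \<ge> 2"
  shows "(\<forall>n (V :: 'a set) A. k_admissible k n \<and> n \<ge> 2 * k \<and> finite V \<and> card V = n
            \<and> partial_kstar_design k V A \<and> int (card A) \<le> u_bound n k
            \<longrightarrow> has_completion k V A)
       \<and> (\<forall>n. k_admissible k n \<and> n > 1 \<longrightarrow>
            (\<exists>(V :: nat set) A. finite V \<and> card V = n \<and> partial_kstar_design k V A
               \<and> finite A \<and> int (card A) = u_bound n k + 1 \<and> \<not> has_completion k V A))"
proof (intro conjI allI impI)
  fix n and V :: "'a set" and A
  assume "k_admissible k n \<and> n \<ge> 2 * k \<and> finite V \<and> card V = n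
            \<and> partial_kstar_design k V A \<and> int (card A) \<le> u_bound n k"
  then interpret small_partial_kstar_design k n V A
    using assms by unfold_locales auto
  show "has_completion k V A"
    using completion_exists \<open>k_admissible k n \<and> _\<close> by blast
next
  fix n :: nat
  assume "k_admissible k n \<and> n > 1"
  then have "2 \<le> n"
    by simp
  then obtain A where "partial_kstar_design k {..<n} A" "finite A" "int (card A) = u_bound n k + 1"
    "\<not> has_completion k {..<n} A"
    using counterexample_mod_eq_1[OF assms] counterexample_mod_ne_1[OF assms] by blast
  then show "\<exists>(V :: nat set) A. finite V \<and> card V = n \<and> partial_kstar_design k V A
               \<and> finite A \<and> int (card A) = u_bound n k + 1 \<and> \<not> has_completion k V A"
    by (intro exI[of _ "{..<n}"] exI[of _ A]) simp
qed

end
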